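(* Let $(N,\langle\cdot,\cdot\rangle,\varphi)$ be a modified $H$-type group (see context), with $m=\dim\mathfrak v$. The scalar curvature of $N$ is constant and equal to $S=-\dfrac{m\xi}{4}$.
   Context: Let $N$ be a 2-step nilpotent real Lie group with Lie algebra $\mathfrak n$, Lie bracket $[\cdot,\cdot]$ and center $\mathfrak z$, endowed with a left-invariant pseudo-Riemannian metric $\langle\cdot,\cdot\rangle$ for which $\mathfrak z$ is nondegenerate. Put $\mathfrak v=\mathfrak z^\perp$. For $z\in\mathfrak z$ define $j(z)\in\mathrm{End}(\mathfrak v)$ by $\langle [x,y],z\rangle=\langle y,j(z)x\rangle$ for all $x,y\in\mathfrak v$. Given a quadratic form $\varphi$ on $\mathfrak z$, $(N,\langle\cdot,\cdot\rangle,\varphi)$ is a modified $H$-type group if $j(z)^2=-\varphi(z)\,\mathrm{Id}_{\mathfrak v}$ for all $z\in\mathfrak z$. With $\{z_1,\dots,z_p\}$ a pseudo-orthonormal basis of $\mathfrak z$, $\xi=\sum_{k}\langle z_k,z_k\rangle\varphi(z_k)$. *)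

theory Defs
  imports "HOL-Analysis.Analysis"
begin

text \<open>Lie algebra n modelled on real^'n; br is the Lie bracket, g the (pseudo-Riemannian)
  inner product at the identity, i.e. the left-invariant metric.\<close>

definition lie_algebra :: "(real^'n \<Rightarrow> real^'n \<Rightarrow> real^'n) \<Rightarrow> bool" where
  "lie_algebra br \<longleftrightarrow> bilinear br \<and> (\<forall>x. br x x = 0) \<and>
     (\<forall>x y w. br x (br y w) + br y (br w x) + br w (br x y) = 0)"

definition lie_center :: "(real^'n \<Rightarrow> real^'n \<Rightarrow> real^'n) \<Rightarrow> (real^'n) set" where
  "lie_center br = {x. \<forall>y. br x y = 0}"

definition two_step_nilpotent :: "(real^'n \<Rightarrow> real^'n \<Rightarrow> real^'n) \<Rightarrow> bool" where
  "two_step_nilpotent br \<longleftrightarrow> lie_algebra br \<and> (\<exists>x y. br x y \<noteq> 0) \<and>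
     (\<forall>x y w. br (br x y) w = 0)"

definition pseudo_metric :: "(real^'n \<Rightarrow> real^'n \<Rightarrow> real) \<Rightarrow> bool" where
  "pseudo_metric g \<longleftrightarrow> bilinear g \<and> (\<forall>x y. g x y = g y x) \<and>
     (\<forall>x. (\<forall>y. g x y = 0) \<longrightarrow> x = 0)"

definition nondegenerate_on :: "(real^'n \<Rightarrow> real^'n \<Rightarrow> real) \<Rightarrow> (real^'n) set \<Rightarrow> bool" where
  "nondegenerate_on g U \<longleftrightarrow> (\<forall>x\<in>U. (\<forall>y\<in>U. g x y = 0) \<longrightarrow> x = 0)"

definition orth_compl :: "(real^'n \<Rightarrow> real^'n \<Rightarrow> real) \<Rightarrow> (real^'n) set \<Rightarrow> (real^'n) set" where
  "orth_compl g U = {x. \<forall>u\<in>U. g x u = 0}"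

definition quadratic_form_on :: "(real^'n \<Rightarrow> real) \<Rightarrow> (real^'n) set \<Rightarrow> bool" where
  "quadratic_form_on \<phi> U \<longleftrightarrow> (\<exists>B. bilinear B \<and> (\<forall>x y. B x y = B y x) \<and> (\<forall>z\<in>U. \<phi> z = B z z))"

definition modified_H_type ::
  "(real^'n \<Rightarrow> real^'n \<Rightarrow> real^'n) \<Rightarrow> (real^'n \<Rightarrow> real^'n \<Rightarrow> real) \<Rightarrow> (real^'n \<Rightarrow> real) \<Rightarrow> bool" where
  "modified_H_type br g \<phi> \<longleftrightarrow>
     two_step_nilpotent br \<and> pseudo_metric g \<and> nondegenerate_on g (lie_center br) \<and>
     quadratic_form_on \<phi> (lie_center br) \<and>
     (\<exists>j :: real^'n \<Rightarrow> real^'n \<Rightarrow> real^'n.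
        \<forall>z\<in>lie_center br.
          (\<forall>x\<in>orth_compl g (lie_center br). j z x \<in> orth_compl g (lie_center br)) \<and>
          (\<forall>x\<in>orth_compl g (lie_center br). \<forall>y\<in>orth_compl g (lie_center br).
              g (br x y) z = g y (j z x)) \<and>
          (\<forall>x\<in>orth_compl g (lie_center br). j z (j z x) = - (\<phi> z) *\<^sub>R x))"

definition pseudo_orthonormal_basis ::
  "(real^'n \<Rightarrow> real^'n \<Rightarrow> real) \<Rightarrow> (real^'n) set \<Rightarrow> (real^'n) set \<Rightarrow> bool" where
  "pseudo_orthonormal_basis g U B \<longleftrightarrow> B \<subseteq> U \<and> independent B \<and> span B = U \<and>
     (\<forall>a\<in>B. \<forall>b\<in>B. a \<noteq> b \<longrightarrow> g a b = 0) \<and> (\<forall>a\<in>B. g a a = 1 \<or> g a a = -1)"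

text \<open>Levi-Civita connection of the left-invariant metric on left-invariant fields (Koszul formula).\<close>
definition levi_civita ::
  "(real^'n \<Rightarrow> real^'n \<Rightarrow> real^'n) \<Rightarrow> (real^'n \<Rightarrow> real^'n \<Rightarrow> real) \<Rightarrow> real^'n \<Rightarrow> real^'n \<Rightarrow> real^'n" where
  "levi_civita br g x y = (THE u. \<forall>w. 2 * g u w = g (br x y) w - g (br y w) x + g (br w x) y)"

definition curvature ::
  "(real^'n \<Rightarrow> real^'n \<Rightarrow> real^'n) \<Rightarrow> (real^'n \<Rightarrow> real^'n \<Rightarrow> real) \<Rightarrow> real^'n \<Rightarrow> real^'n \<Rightarrow> real^'n \<Rightarrow> real^'n" where
  "curvature br g x y w = levi_civita br g x (levi_civita br g y w) - levi_civita br g y (levi_civita br g x w)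
      - levi_civita br g (br x y) w"

definition lin_trace :: "(real^'n \<Rightarrow> real^'n) \<Rightarrow> real" where
  "lin_trace f = (\<Sum>i\<in>UNIV. f (axis i 1) $ i)"

definition ricci :: "(real^'n \<Rightarrow> real^'n \<Rightarrow> real^'n) \<Rightarrow> (real^'n \<Rightarrow> real^'n \<Rightarrow> real) \<Rightarrow> real^'n \<Rightarrow> real^'n \<Rightarrow> real" where
  "ricci br g y w = lin_trace (\<lambda>x. curvature br g x y w)"

definition ricci_operator :: "(real^'n \<Rightarrow> real^'n \<Rightarrow> real^'n) \<Rightarrow> (real^'n \<Rightarrow> real^'n \<Rightarrow> real) \<Rightarrow> real^'n \<Rightarrow> real^'n" where
  "ricci_operator br g y = (THE u. \<forall>w. g u w = ricci br g y w)"

text \<open>Scalar curvature of the left-invariant metric (constant on N by left-invariance).\<close>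
definition scalar_curvature :: "(real^'n \<Rightarrow> real^'n \<Rightarrow> real^'n) \<Rightarrow> (real^'n \<Rightarrow> real^'n \<Rightarrow> real) \<Rightarrow> real" where
  "scalar_curvature br g = lin_trace (ricci_operator br g)"

end

theory Submission
  imports Defs
begin

(* Extend j to all arguments by g (jmap a x) y = g [x,y] a. Koszul's formula then gives
   nabla_x y = 1/2 [x,y] - 1/2 (jmap x y + jmap y x), and since the algebra is 2-step nilpotent
   the curvature R(x,y)w is a combination of eleven bracket/jmap monomials. Split all traces
   along z (+) v using the pseudo-orthonormal basis of z: operators exchanging z and v, and the
   skew operators jmap c, are traceless, while the remaining monomials contribute through
   j(z)^2 = -phi(z). This gives Ric(y,w) = -xi/2 g(y_v,w) - 1/4 tr(j(y) j(w)), and tracing once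
   more, S = -xi m/2 + xi m/4. *)

section \<open>Nondegenerate symmetric bilinear forms and traces\<close>

lemma linear_coordinates:
  fixes F :: "real^'n \<Rightarrow> real"
  assumes "linear F"
  shows "F v = (\<Sum>k\<in>UNIV. v $ k * F (axis k 1))"
proof -
  have "F v = F (\<Sum>k\<in>UNIV. (v $ k) *\<^sub>R axis k 1)"
    using basis_expansion[of v] by (simp add: scalar_mult_eq_scaleR)
  then show ?thesis by (simp add: linear_sum[OF assms] linear_scale[OF assms])
qed

locale pseudo_euclidean =
  fixes g :: "real^'n \<Rightarrow> real^'n \<Rightarrow> real"
  assumes pseudo_metric: "pseudo_metric g"
begin

lemma bilinear_g: "bilinear g"
  and g_commute: "g x y = g y x"
  and g_nondegenerate: "(\<And>y. g x y = 0) \<Longrightarrow> x = 0"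
  using pseudo_metric unfolding pseudo_metric_def by auto

lemma linear_g_left: "linear (\<lambda>x. g x y)"
  and linear_g_right: "linear (g x)"
  using bilinear_g by (simp_all add: bilinear_def)

lemma g_simps [simp]:
  "g (x + y) w = g x w + g y w" "g w (x + y) = g w x + g w y"
  "g (x - y) w = g x w - g y w" "g w (x - y) = g w x - g w y"
  "g (c *\<^sub>R x) w = c * g x w" "g w (c *\<^sub>R x) = c * g w x"
  "g (- x) w = - g x w" "g w (- x) = - g w x"
  "g 0 w = 0" "g w 0 = 0"
  "g (sum f S) w = (\<Sum>i\<in>S. g (f i) w)" "g w (sum f S) = (\<Sum>i\<in>S. g w (f i))"
  using linear_add[OF linear_g_left] linear_add[OF linear_g_right]
    linear_diff[OF linear_g_left] linear_diff[OF linear_g_right]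
    linear_scale[OF linear_g_left] linear_scale[OF linear_g_right]
    linear_neg[OF linear_g_left] linear_neg[OF linear_g_right]
    linear_0[OF linear_g_left] linear_0[OF linear_g_right]
    linear_sum[OF linear_g_left] linear_sum[OF linear_g_right]
  by simp_all

lemma g_eqI: "(\<And>w. g u w = g v w) \<Longrightarrow> u = v"
  using g_nondegenerate[of "u - v"] by simp

lemma dual_basis_exists: "\<exists>d. \<forall>i v. g v (d i) = v $ i"
proof -
  define G :: "real^'n \<Rightarrow> real^'n" where "G x = (\<chi> k. g x (axis k 1))" for x
  have "linear G" by (rule linearI) (simp_all add: G_def vec_eq_iff)
  moreover have "inj G"
  proof (rule injI)
    fix x y assume "G x = G y"
    then have "g (x - y) (axis k 1) = 0" for k by (simp add: G_def vec_eq_iff)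
    then have "g (x - y) w = 0" for w
      using linear_coordinates[OF linear_g_right, of "x - y" w] by simp
    then show "x = y" using g_nondegenerate[of "x - y"] by simp
  qed
  ultimately have "surj G" by (rule linear_injective_imp_surjective) simp
  define d where "d i = inv G (axis i 1)" for i
  then have d: "G (d i) = axis i 1" for i using \<open>surj G\<close> by (simp add: surj_f_inv_f)
  have d_axis: "g (d i) (axis k 1) = axis i 1 $ k" for i k
    using d[of i] by (simp add: G_def vec_eq_iff)
  have "g v (d i) = v $ i" for v i
  proof -
    have "g v (d i) = (\<Sum>k\<in>UNIV. v $ k * axis i 1 $ k)"
      by (simp add: g_commute[of v] linear_coordinates[OF linear_g_right, of "d i" v] d_axis)
    also have "\<dots> = v $ i" by (simp add: axis_def if_distrib cong: if_cong)
    finally show ?thesis .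
  qed
  then show ?thesis by blast
qed

definition dual_basis :: "'n \<Rightarrow> real^'n" where
  "dual_basis = (SOME d. \<forall>i v. g v (d i) = v $ i)"

lemma g_dual_basis [simp]: "g v (dual_basis i) = v $ i" "g (dual_basis i) v = v $ i"
  using someI_ex[OF dual_basis_exists] by (simp_all add: dual_basis_def g_commute)

lemma ex1_representative:
  assumes F: "linear F"
  shows "\<exists>!u. \<forall>w. g u w = F w"
proof -
  define u where "u = (\<Sum>k\<in>UNIV. F (axis k 1) *\<^sub>R dual_basis k)"
  have representative: "g u w = F w" for w
    by (simp add: u_def linear_coordinates[OF F, of w] mult.commute)
  show ?thesis
  proof (rule ex1I[of _ u])
    fix u' assume "\<forall>w. g u' w = F w"
    then show "u' = u" by (intro g_eqI) (simp add: representative)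
  qed (simp add: representative)
qed

lemma g_the_representative:
  "linear F \<Longrightarrow> g (THE u. \<forall>w. g u w = F w) w = F w"
  using theI'[OF ex1_representative] by blast

(* The trace of the endomorphism g^-1 B. *)
definition metric_trace :: "(real^'n \<Rightarrow> real^'n \<Rightarrow> real) \<Rightarrow> real" where
  "metric_trace B = (\<Sum>i\<in>UNIV. B (axis i 1) (dual_basis i))"

lemma lin_trace_eq_metric_trace: "lin_trace f = metric_trace (\<lambda>x u. g (f x) u)"
  by (simp add: lin_trace_def metric_trace_def)

lemma lin_trace_simps [simp]:
  "lin_trace (\<lambda>x. f x + h x) = lin_trace f + lin_trace h"
  "lin_trace (\<lambda>x. f x - h x) = lin_trace f - lin_trace h"
  "lin_trace (\<lambda>x. c *\<^sub>R f x) = c * lin_trace f"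
  "lin_trace (\<lambda>x. - f x) = - lin_trace f"
  "lin_trace (\<lambda>x. 0) = 0"
  by (simp_all add: lin_trace_def sum.distrib sum_subtractf sum_distrib_left sum_negf)

lemma metric_trace_simps [simp]:
  "metric_trace (\<lambda>x u. B1 x u + B2 x u) = metric_trace B1 + metric_trace B2"
  "metric_trace (\<lambda>x u. B1 x u - B2 x u) = metric_trace B1 - metric_trace B2"
  "metric_trace (\<lambda>x u. c * B x u) = c * metric_trace B"
  "metric_trace (\<lambda>x u. B x u / c) = metric_trace B / c"
  "metric_trace (\<lambda>x u. - B x u) = - metric_trace B"
  "metric_trace (\<lambda>x u. 0) = 0"
  "metric_trace (\<lambda>x u. \<Sum>k\<in>S. Bs k x u) = (\<Sum>k\<in>S. metric_trace (Bs k))"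
  by (simp_all add: metric_trace_def sum.distrib sum_subtractf sum_distrib_left sum_negf
      sum_divide_distrib sum.swap[of _ S])

lemma metric_trace_rank_one_left: "linear F \<Longrightarrow> metric_trace (\<lambda>x u. g x a * F u) = F a"
proof -
  assume F: "linear F"
  have dual_expansion: "(\<Sum>i\<in>UNIV. g (axis i 1) a *\<^sub>R dual_basis i) = a"
  proof (rule g_eqI)
    fix w
    show "g (\<Sum>i\<in>UNIV. g (axis i 1) a *\<^sub>R dual_basis i) w = g a w"
      by (simp add: g_commute[of a w] linear_coordinates[OF linear_g_left, of w a] mult.commute)
  qed
  have "metric_trace (\<lambda>x u. g x a * F u) = F (\<Sum>i\<in>UNIV. g (axis i 1) a *\<^sub>R dual_basis i)"
    by (simp add: metric_trace_def linear_sum[OF F] linear_scale[OF F])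
  then show ?thesis by (simp add: dual_expansion)
qed

lemma metric_trace_rank_one_right: "linear F \<Longrightarrow> metric_trace (\<lambda>x u. F x * g u a) = F a"
  by (simp add: metric_trace_def linear_coordinates[of F a] mult.commute)

lemma dual_basis_commute: "dual_basis i $ k = dual_basis k $ i"
  by (rule trans[OF sym[OF g_dual_basis(1)] g_dual_basis(2)])

lemma metric_trace_transpose:
  assumes B: "bilinear B"
  shows "metric_trace (\<lambda>x u. B u x) = metric_trace B"
proof -
  have expand_left: "B (dual_basis i) x = (\<Sum>k\<in>UNIV. dual_basis i $ k * B (axis k 1) x)"
    and expand_right: "B x (dual_basis i) = (\<Sum>k\<in>UNIV. dual_basis i $ k * B x (axis k 1))" for x i
    using linear_coordinates[of "\<lambda>y. B y x" "dual_basis i"]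
      linear_coordinates[of "B x" "dual_basis i"] B
    by (simp_all add: bilinear_def)
  have "metric_trace (\<lambda>x u. B u x)
      = (\<Sum>i\<in>UNIV. \<Sum>k\<in>UNIV. dual_basis i $ k * B (axis k 1) (axis i 1))"
    by (simp add: metric_trace_def expand_left)
  also have "\<dots> = (\<Sum>k\<in>UNIV. \<Sum>i\<in>UNIV. dual_basis i $ k * B (axis k 1) (axis i 1))"
    by (rule sum.swap)
  also have "\<dots> = (\<Sum>k\<in>UNIV. \<Sum>i\<in>UNIV. dual_basis k $ i * B (axis k 1) (axis i 1))"
    by (simp add: dual_basis_commute)
  also have "\<dots> = metric_trace B"
    by (simp add: metric_trace_def expand_right)
  finally show ?thesis .
qed

lemma bilinear_g_linear_left: "linear f \<Longrightarrow> bilinear (\<lambda>x u. g (f x) u)"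
  unfolding bilinear_def by (auto intro!: linearI simp: linear_add linear_scale)

lemma lin_trace_skew_adjoint:
  assumes "linear f" and "\<And>x y. g (f x) y = - g (f y) x"
  shows "lin_trace f = 0"
proof -
  have "(\<lambda>x u. g (f u) x) = (\<lambda>x u. - g (f x) u)" by (intro ext) (rule assms(2))
  then show ?thesis
    using metric_trace_transpose[OF bilinear_g_linear_left[OF assms(1)]]
    by (simp add: lin_trace_eq_metric_trace)
qed

end

section \<open>Splitting along a subspace with a pseudo-orthonormal basis\<close>

locale pseudo_orthonormal_frame = pseudo_euclidean g for g :: "real^'n \<Rightarrow> real^'n \<Rightarrow> real" +
  fixes U Zb :: "(real^'n) set"
  assumes frame: "pseudo_orthonormal_basis g U Zb"
begin

abbreviation Uperp :: "(real^'n) set" where "Uperp \<equiv> orth_compl g U"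

lemma span_frame: "span Zb = U"
  and independent_frame: "independent Zb"
  and frame_orthogonal: "b \<in> Zb \<Longrightarrow> c \<in> Zb \<Longrightarrow> b \<noteq> c \<Longrightarrow> g b c = 0"
  and frame_normalized: "b \<in> Zb \<Longrightarrow> g b b = 1 \<or> g b b = -1"
  using frame unfolding pseudo_orthonormal_basis_def by auto

lemma finite_frame [simp]: "finite Zb"
  using independent_frame by (rule finiteI_independent)

lemma frame_in_U [simp]: "b \<in> Zb \<Longrightarrow> b \<in> U"
  using span_frame span_base by blast

lemma frame_norm_squared [simp]: "b \<in> Zb \<Longrightarrow> g b b * g b b = 1"
  using frame_normalized by fastforce

lemma subspace_U: "subspace U"
  using span_frame subspace_span by blast

lemma subspace_Uperp: "subspace Uperp"
  unfolding subspace_def orth_compl_def by simp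

lemma zero_in_U [simp]: "0 \<in> U" and zero_in_Uperp [simp]: "0 \<in> Uperp"
  using subspace_0 subspace_U subspace_Uperp by blast+

lemma g_Uperp_U [simp]: "v \<in> Uperp \<Longrightarrow> u \<in> U \<Longrightarrow> g v u = 0"
  and g_U_Uperp [simp]: "v \<in> Uperp \<Longrightarrow> u \<in> U \<Longrightarrow> g u v = 0"
  unfolding orth_compl_def by (auto simp: g_commute[of u])

(* The factor g b b = 1 or -1 is its own inverse, so this is the g-orthogonal projection. *)
definition proj :: "real^'n \<Rightarrow> real^'n" where
  "proj x = (\<Sum>b\<in>Zb. (g b b * g x b) *\<^sub>R b)"

definition proj_perp :: "real^'n \<Rightarrow> real^'n" where
  "proj_perp x = x - proj x"

lemma linear_proj: "linear proj"
  by (rule linearI)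
    (simp_all add: proj_def sum.distrib scaleR_sum_right algebra_simps)

lemma linear_proj_perp: "linear proj_perp"
  unfolding proj_perp_def by (intro linear_compose_sub linear_ident linear_proj)

lemma proj_simps [simp]:
  "proj (x + y) = proj x + proj y" "proj (c *\<^sub>R x) = c *\<^sub>R proj x" "proj 0 = 0"
  "proj_perp (x + y) = proj_perp x + proj_perp y"
  "proj_perp (c *\<^sub>R x) = c *\<^sub>R proj_perp x" "proj_perp 0 = 0"
  by (simp_all add: linear_add linear_scale linear_0 linear_proj linear_proj_perp)

lemma proj_add_proj_perp: "proj x + proj_perp x = x"
  by (simp add: proj_perp_def)

lemma g_proj_frame: "b \<in> Zb \<Longrightarrow> g (proj x) b = g x b"
proof -
  assume b: "b \<in> Zb"
  have "g (proj x) b = (\<Sum>c\<in>Zb. g c c * g x c * g c b)"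
    by (simp add: proj_def)
  also have "\<dots> = (\<Sum>c\<in>Zb. if c = b then g x b * (g b b * g b b) else 0)"
    using b by (intro sum.cong) (auto simp: frame_orthogonal)
  also have "\<dots> = g x b" using b by simp
  finally show ?thesis .
qed

lemma proj_in_U [simp]: "proj x \<in> U"
  unfolding proj_def span_frame[symmetric]
  by (intro span_sum span_scale span_base)

lemma proj_perp_in_Uperp [simp]: "proj_perp x \<in> Uperp"
proof (unfold orth_compl_def, intro CollectI ballI)
  fix u assume "u \<in> U"
  then have "u \<in> span Zb" by (simp add: span_frame)
  then show "g (proj_perp x) u = 0"
    by (induct rule: span_induct_alt) (simp_all add: proj_perp_def g_proj_frame)
qed

lemma proj_Uperp: "v \<in> Uperp \<Longrightarrow> proj v = 0"
  by (simp add: proj_def)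

lemma proj_perp_Uperp: "v \<in> Uperp \<Longrightarrow> proj_perp v = v"
  by (simp add: proj_perp_def proj_Uperp)

lemma proj_frame: "b \<in> Zb \<Longrightarrow> proj b = b"
proof -
  assume b: "b \<in> Zb"
  have "proj b = (\<Sum>c\<in>Zb. if c = b then (g b b * g b b) *\<^sub>R b else 0)"
    unfolding proj_def using b by (intro sum.cong) (auto simp: frame_orthogonal)
  then show ?thesis using b by simp
qed

lemma proj_U: "u \<in> U \<Longrightarrow> proj u = u"
  unfolding span_frame[symmetric]
  by (induct rule: span_induct_alt) (simp_all add: proj_frame)

lemma proj_perp_U: "u \<in> U \<Longrightarrow> proj_perp u = 0"
  by (simp add: proj_perp_def proj_U)

lemma proj_proj_perp [simp]: "proj (proj_perp x) = 0"
  and proj_perp_proj [simp]: "proj_perp (proj x) = 0"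
  and proj_perp_proj_perp [simp]: "proj_perp (proj_perp x) = proj_perp x"
  by (simp_all add: proj_Uperp proj_perp_U proj_perp_Uperp)

lemma g_proj_perp_right: "v \<in> Uperp \<Longrightarrow> g v (proj_perp x) = g v x"
  using g_simps(2)[of v "proj x" "proj_perp x"] by (simp add: proj_add_proj_perp)

lemma g_proj_perp_commute: "g (proj_perp x) y = g (proj_perp y) x"
  by (metis g_commute g_proj_perp_right proj_perp_in_Uperp)

lemma U_inter_Uperp: "U \<inter> Uperp = {0}"
proof -
  have "x = 0" if "x \<in> U" "x \<in> Uperp" for x
    using proj_U[OF that(1)] proj_Uperp[OF that(2)] by simp
  then show ?thesis by auto
qed

lemma dim_Uperp: "dim Uperp + card Zb = CARD('n)"
proof -
  have "x \<in> {x + y |x y. x \<in> U \<and> y \<in> Uperp}" for x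
    unfolding mem_Collect_eq
    by (intro exI[of _ "proj x"] exI[of _ "proj_perp x"]) (simp add: proj_add_proj_perp)
  then have "{x + y |x y. x \<in> U \<and> y \<in> Uperp} = UNIV" by blast
  then have "dim (UNIV :: (real^'n) set) = dim U + dim Uperp"
    using dim_sums_Int[OF subspace_U subspace_Uperp] by (simp add: U_inter_Uperp)
  moreover have "dim U = card Zb"
    using dim_span_eq_card_independent[OF independent_frame] by (simp add: span_frame)
  ultimately show ?thesis by simp
qed

lemma g_U_expansion: "c \<in> U \<Longrightarrow> g c c' = (\<Sum>b\<in>Zb. g b b * g c b * g c' b)"
proof -
  assume "c \<in> U"
  then have "g c c' = g (proj c) c'" by (simp add: proj_U)
  also have "\<dots> = (\<Sum>b\<in>Zb. g b b * g c b * g b c')" by (simp add: proj_def)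
  finally show ?thesis by (simp add: g_commute[of _ c'])
qed

lemma metric_trace_split:
  assumes B: "bilinear B"
  shows "metric_trace B =
    (\<Sum>b\<in>Zb. g b b * B b b) + metric_trace (\<lambda>x u. B (proj_perp x) (proj_perp u))"
proof -
  have l: "linear (\<lambda>x. B x u)" "linear (B x)" for x u
    using B by (simp_all add: bilinear_def)
  have "linear (\<lambda>x. B (proj_perp x) u)" for u
    using linear_compose[OF linear_proj_perp l(1)] by (simp add: o_def)
  then have trace_mixed: "b \<in> U \<Longrightarrow> metric_trace (\<lambda>x u. B (proj_perp x) b * g u b) = 0" for b
    by (simp add: metric_trace_rank_one_right linear_0[OF l(1)] proj_perp_U)
  have decomposition: "B x u = (\<Sum>b\<in>Zb. g b b * (g x b * B b u))
      + (\<Sum>b\<in>Zb. g b b * (B (proj_perp x) b * g u b)) + B (proj_perp x) (proj_perp u)" for x u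
  proof -
    have "B x u = B (proj x) u + B (proj_perp x) (proj u) + B (proj_perp x) (proj_perp u)"
      using proj_add_proj_perp[of x] proj_add_proj_perp[of u]
        linear_add[OF l(1)] linear_add[OF l(2)]
      by (metis add.assoc)
    then show ?thesis
      unfolding proj_def by (simp add: linear_sum[OF l(1)] linear_scale[OF l(1)]
        linear_sum[OF l(2)] linear_scale[OF l(2)] mult_ac)
  qed
  have "metric_trace B = metric_trace (\<lambda>x u. (\<Sum>b\<in>Zb. g b b * (g x b * B b u))
      + (\<Sum>b\<in>Zb. g b b * (B (proj_perp x) b * g u b)) + B (proj_perp x) (proj_perp u))"
    by (rule arg_cong[of _ _ metric_trace]) (intro ext decomposition)
  then show ?thesis
    by (simp add: metric_trace_rank_one_left[OF l(2)] trace_mixed cong: sum.cong)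
qed

lemma lin_trace_split:
  assumes "linear f"
  shows "lin_trace f = (\<Sum>b\<in>Zb. g b b * g (f b) b) + lin_trace (\<lambda>x. proj_perp (f (proj_perp x)))"
proof -
  have "(\<lambda>x u. g (f (proj_perp x)) (proj_perp u)) = (\<lambda>x u. g (proj_perp (f (proj_perp x))) u)"
    by (intro ext) (simp add: g_commute[of "f _"] g_proj_perp_commute)
  then show ?thesis
    using metric_trace_split[OF bilinear_g_linear_left[OF assms]]
    by (simp add: lin_trace_eq_metric_trace)
qed

lemma lin_trace_proj_perp: "lin_trace proj_perp = real (dim Uperp)"
proof -
  have "lin_trace (\<lambda>x::real^'n. x) = real (card Zb) + lin_trace proj_perp"
    using lin_trace_split[OF linear_ident] by (simp cong: sum.cong)
  moreover have "lin_trace (\<lambda>x::real^'n. x) = real CARD('n)"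
    by (simp add: lin_trace_def)
  ultimately show ?thesis using dim_Uperp by (simp flip: of_nat_add)
qed

lemma lin_trace_off_diagonal:
  assumes "linear f" and "\<And>u. u \<in> U \<Longrightarrow> f u \<in> Uperp" and "\<And>v. v \<in> Uperp \<Longrightarrow> f v \<in> U"
  shows "lin_trace f = 0"
  using lin_trace_split[OF assms(1)] by (simp add: assms(2,3) proj_perp_U)

end

section \<open>Levi-Civita connection of a metric Lie algebra\<close>

locale metric_lie_algebra = pseudo_euclidean g for g :: "real^'n \<Rightarrow> real^'n \<Rightarrow> real" +
  fixes br :: "real^'n \<Rightarrow> real^'n \<Rightarrow> real^'n"
  assumes lie_algebra: "lie_algebra br"
begin

lemma bilinear_br: "bilinear br" and br_self: "br x x = 0"
  using lie_algebra unfolding lie_algebra_def by auto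

lemma linear_br_left: "linear (\<lambda>x. br x y)"
  and linear_br_right: "linear (br x)"
  using bilinear_br by (simp_all add: bilinear_def)

lemma br_simps [simp]:
  "br (x + y) w = br x w + br y w" "br w (x + y) = br w x + br w y"
  "br (x - y) w = br x w - br y w" "br w (x - y) = br w x - br w y"
  "br (c *\<^sub>R x) w = c *\<^sub>R br x w" "br w (c *\<^sub>R x) = c *\<^sub>R br w x"
  "br (- x) w = - br x w" "br w (- x) = - br w x"
  "br 0 w = 0" "br w 0 = 0"
  using linear_add[OF linear_br_left] linear_add[OF linear_br_right]
    linear_diff[OF linear_br_left] linear_diff[OF linear_br_right]
    linear_scale[OF linear_br_left] linear_scale[OF linear_br_right]
    linear_neg[OF linear_br_left] linear_neg[OF linear_br_right]
    linear_0[OF linear_br_left] linear_0[OF linear_br_right]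
  by simp_all

lemma br_anticommute: "br y x = - br x y"
proof -
  have "br (x + y) (x + y) = br x x + br x y + (br y x + br y y)"
    by (simp only: br_simps(1,2) add_ac)
  then have "br x y + br y x = 0" by (simp add: br_self)
  then show ?thesis by (simp add: eq_neg_iff_add_eq_0 add.commute)
qed

(* The paper's j(z) x, extended to arbitrary z and x. *)
definition jmap :: "real^'n \<Rightarrow> real^'n \<Rightarrow> real^'n" where
  "jmap a x = (THE u. \<forall>y. g u y = g (br x y) a)"

lemma g_jmap: "g (jmap a x) y = g (br x y) a"
  unfolding jmap_def by (rule g_the_representative) (intro linearI; simp)

lemma jmap_eqI: "(\<And>y. g u y = g (br x y) a) \<Longrightarrow> jmap a x = u"
  by (rule g_eqI) (simp add: g_jmap)

lemma jmap_simps [simp]: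
  "jmap (a + b) x = jmap a x + jmap b x" "jmap x (a + b) = jmap x a + jmap x b"
  "jmap (a - b) x = jmap a x - jmap b x" "jmap x (a - b) = jmap x a - jmap x b"
  "jmap (c *\<^sub>R a) x = c *\<^sub>R jmap a x" "jmap x (c *\<^sub>R a) = c *\<^sub>R jmap x a"
  "jmap (- a) x = - jmap a x" "jmap x (- a) = - jmap x a"
  "jmap 0 x = 0" "jmap x 0 = 0"
  by (rule jmap_eqI; simp add: g_jmap)+

lemma g_jmap_skew: "g (jmap a x) y = - g (jmap a y) x"
  by (simp add: g_jmap br_anticommute[of x y])

lemma levi_civita_eq:
  "levi_civita br g x y = (1/2) *\<^sub>R br x y - (1/2) *\<^sub>R (jmap x y + jmap y x)"
  unfolding levi_civita_def
proof (rule the_equality)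
  have koszul: "2 * g ((1/2) *\<^sub>R br x y - (1/2) *\<^sub>R (jmap x y + jmap y x)) w
      = g (br x y) w - g (br y w) x + g (br w x) y" for w
    by (simp add: g_jmap br_anticommute[of _ x] algebra_simps)
  then show "\<forall>w. 2 * g ((1/2) *\<^sub>R br x y - (1/2) *\<^sub>R (jmap x y + jmap y x)) w
      = g (br x y) w - g (br y w) x + g (br w x) y" ..
  fix u assume u: "\<forall>w. 2 * g u w = g (br x y) w - g (br y w) x + g (br w x) y"
  show "u = (1/2) *\<^sub>R br x y - (1/2) *\<^sub>R (jmap x y + jmap y x)"
  proof (rule g_eqI)
    fix w show "g u w = g ((1/2) *\<^sub>R br x y - (1/2) *\<^sub>R (jmap x y + jmap y x)) w"
      using spec[OF u, of w] koszul[of w] by linarith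
  qed
qed

lemma scalar_curvature_eq_metric_trace:
  assumes "\<And>y. linear (ricci br g y)"
  shows "scalar_curvature br g = metric_trace (ricci br g)"
proof -
  have "(\<lambda>y w. g (ricci_operator br g y) w) = ricci br g"
    unfolding ricci_operator_def by (intro ext) (rule g_the_representative[OF assms])
  then show ?thesis by (simp add: scalar_curvature_def lin_trace_eq_metric_trace)
qed

end

section \<open>Modified H-type groups\<close>

locale modified_H_type_group =
  fixes br :: "real^'n \<Rightarrow> real^'n \<Rightarrow> real^'n"
    and g :: "real^'n \<Rightarrow> real^'n \<Rightarrow> real"
    and \<phi> :: "real^'n \<Rightarrow> real"
    and Zb :: "(real^'n) set"
  assumes modified_H_type: "modified_H_type br g \<phi>"
    and center_frame: "pseudo_orthonormal_basis g (lie_center br) Zb"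
begin

sublocale metric_lie_algebra g br
  using modified_H_type
  by unfold_locales (simp_all add: modified_H_type_def two_step_nilpotent_def)

sublocale pseudo_orthonormal_frame g "lie_center br" Zb
  using center_frame by unfold_locales

abbreviation Z :: "(real^'n) set" where "Z \<equiv> lie_center br"
abbreviation V :: "(real^'n) set" where "V \<equiv> orth_compl g (lie_center br)"

lemma br_in_Z [simp]: "br x y \<in> Z"
  using modified_H_type
  by (simp add: lie_center_def modified_H_type_def two_step_nilpotent_def)

lemma br_Z_left [simp]: "z \<in> Z \<Longrightarrow> br z y = 0"
  and br_Z_right [simp]: "z \<in> Z \<Longrightarrow> br y z = 0"
  by (simp_all add: lie_center_def br_anticommute[of y z])

lemma jmap_in_V [simp]: "jmap a x \<in> V"
proof (unfold orth_compl_def, intro CollectI ballI)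
  fix z assume "z \<in> Z"
  then show "g (jmap a x) z = 0" by (simp add: g_jmap)
qed

lemma jmap_V_left [simp]: "v \<in> V \<Longrightarrow> jmap v x = 0"
  and jmap_Z_right [simp]: "z \<in> Z \<Longrightarrow> jmap a z = 0"
  by (rule jmap_eqI; simp)+

lemma jmap_jmap_Z: "z \<in> Z \<Longrightarrow> jmap z (jmap z x) = - \<phi> z *\<^sub>R proj_perp x"
proof -
  assume z: "z \<in> Z"
  obtain j where j_V: "\<And>x. x \<in> V \<Longrightarrow> j z x \<in> V"
    and j_adjoint: "\<And>x y. x \<in> V \<Longrightarrow> y \<in> V \<Longrightarrow> g (br x y) z = g y (j z x)"
    and j_squared: "\<And>x. x \<in> V \<Longrightarrow> j z (j z x) = - \<phi> z *\<^sub>R x"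
    using modified_H_type z unfolding modified_H_type_def by blast
  have jmap_eq_j: "jmap z x = j z x" if "x \<in> V" for x
  proof (rule jmap_eqI)
    fix y
    have "g (j z x) y = g (j z x) (proj_perp y)"
      using j_V[OF that] by (simp add: g_proj_perp_right)
    also have "\<dots> = g (br x (proj_perp y)) z"
      using that j_V[OF that] by (simp add: j_adjoint g_commute[of "j z x"])
    also have "\<dots> = g (br x y) z"
      using br_simps(2)[of x "proj y" "proj_perp y"] by (simp add: proj_add_proj_perp)
    finally show "g (j z x) y = g (br x y) z" .
  qed
  have "jmap z x = jmap z (proj_perp x)"
    using jmap_simps(2)[of z "proj x" "proj_perp x"] by (simp add: proj_add_proj_perp)
  then show ?thesis
    by (simp add: jmap_eq_j j_V j_squared)
qed

lemma g_jmap_jmap_Z: "z \<in> Z \<Longrightarrow> g (jmap z x) (jmap z y) = \<phi> z * g (proj_perp x) y"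
  by (simp add: g_jmap_skew[of z x] jmap_jmap_Z g_proj_perp_commute[of y])

lemma curvature_eq: "curvature br g x y w = (1/4) *\<^sub>R
    (- jmap (br y w) x - br x (jmap y w) + jmap x (jmap y w) - br x (jmap w y) + jmap x (jmap w y)
     + jmap (br x w) y + br y (jmap x w) - jmap y (jmap x w) + br y (jmap w x) - jmap y (jmap w x)
     + 2 *\<^sub>R jmap (br x y) w)"
  unfolding curvature_def levi_civita_eq by (simp add: algebra_simps)

definition \<xi> :: real where "\<xi> = (\<Sum>b\<in>Zb. g b b * \<phi> b)"

definition jj_trace :: "real^'n \<Rightarrow> real^'n \<Rightarrow> real" where
  "jj_trace y w = lin_trace (\<lambda>x. jmap y (jmap w x))"

lemma lin_trace_vanishing [simp]:
  "lin_trace (\<lambda>x. br x a) = 0"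
  "lin_trace (\<lambda>x. jmap x a) = 0"
  "lin_trace (\<lambda>x. br y (jmap w x)) = 0"
  "lin_trace (\<lambda>x. jmap y (jmap x w)) = 0"
  by (rule lin_trace_off_diagonal; (intro linearI)?; simp)+

lemma lin_trace_jmap [simp]: "lin_trace (jmap c) = 0"
proof (rule lin_trace_skew_adjoint)
  show "linear (jmap c)" by (intro linearI) simp_all
qed (rule g_jmap_skew)

lemma lin_trace_br_jmap_left [simp]:
  "lin_trace (\<lambda>x. br y (jmap x w)) = \<xi> * g (proj_perp y) w"
proof -
  have "linear (\<lambda>x. br y (jmap x w))" by (intro linearI) simp_all
  then have "lin_trace (\<lambda>x. br y (jmap x w)) = (\<Sum>b\<in>Zb. g b b * g (br y (jmap b w)) b)"
    using lin_trace_split by simp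
  also have "\<dots> = (\<Sum>b\<in>Zb. g b b * \<phi> b * g (proj_perp y) w)"
    by (intro sum.cong) (simp_all add: g_jmap[symmetric] g_jmap_jmap_Z)
  finally show ?thesis by (simp add: \<xi>_def sum_distrib_right)
qed

lemma lin_trace_jmap_br [simp]:
  "lin_trace (\<lambda>x. jmap (br x a) c) = - \<xi> * g (proj_perp a) c"
proof -
  have pointwise: "g (jmap (br x a) c) u = - (\<Sum>b\<in>Zb. g b b * (g x (jmap b a) * g (jmap b c) u))"
    for x u
  proof -
    have "g (jmap (br x a) c) u = g (br c u) (br x a)"
      by (simp add: g_jmap)
    also have "\<dots> = (\<Sum>b\<in>Zb. g b b * g (br c u) b * g (br x a) b)"
      by (rule g_U_expansion) simp
    also have "\<dots> = (\<Sum>b\<in>Zb. g b b * g (jmap b c) u * - g (jmap b a) x)"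
      by (simp add: g_jmap br_anticommute[of a x])
    finally show ?thesis by (simp add: g_commute[of x] sum_negf[symmetric] mult_ac)
  qed
  have "lin_trace (\<lambda>x. jmap (br x a) c)
      = metric_trace (\<lambda>x u. - (\<Sum>b\<in>Zb. g b b * (g x (jmap b a) * g (jmap b c) u)))"
    unfolding lin_trace_eq_metric_trace pointwise ..
  also have "\<dots> = - (\<Sum>b\<in>Zb. g b b * g (jmap b c) (jmap b a))"
    by (simp add: metric_trace_rank_one_left linear_g_right)
  also have "\<dots> = - \<xi> * g (proj_perp a) c"
    by (simp add: \<xi>_def sum_distrib_right g_jmap_jmap_Z g_proj_perp_commute[of c] mult.assoc
        cong: sum.cong)
  finally show ?thesis .
qed

lemma ricci_eq: "ricci br g y w = - (1/2) * \<xi> * g (proj_perp y) w - (1/4) * jj_trace y w"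
proof -
  have "ricci br g y w = (1/4) * (- \<xi> * g (proj_perp w) y + \<xi> * g (proj_perp y) w
      - jj_trace y w + 2 * (- \<xi> * g (proj_perp y) w))"
    by (simp add: ricci_def curvature_eq jj_trace_def)
  then show ?thesis by (simp add: g_proj_perp_commute[of w] algebra_simps)
qed

lemma bilinear_jj_trace: "bilinear jj_trace"
  unfolding bilinear_def jj_trace_def by (auto intro!: linearI)

lemma metric_trace_jj_trace: "metric_trace jj_trace = - \<xi> * real (dim V)"
proof -
  have "jj_trace b b = - \<phi> b * real (dim V)" if "b \<in> Zb" for b
    using that by (simp add: jj_trace_def jmap_jmap_Z lin_trace_proj_perp)
  then have "metric_trace jj_trace = (\<Sum>b\<in>Zb. g b b * (- \<phi> b * real (dim V)))"
    using metric_trace_split[OF bilinear_jj_trace] by (simp add: jj_trace_def cong: sum.cong)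
  then show ?thesis by (simp add: \<xi>_def sum_distrib_left sum_negf mult_ac)
qed

lemma scalar_curvature_eq: "scalar_curvature br g = - real (dim V) * \<xi> / 4"
proof -
  have "linear (ricci br g y)" for y
    using bilinear_jj_trace by (intro linearI) (simp_all add: ricci_eq bilinear_def linear_add
        linear_scale algebra_simps)
  then have "scalar_curvature br g = metric_trace (ricci br g)"
    by (rule scalar_curvature_eq_metric_trace)
  also have "ricci br g = (\<lambda>y w. - (1/2) * \<xi> * g (proj_perp y) w - (1/4) * jj_trace y w)"
    by (intro ext) (rule ricci_eq)
  also have "metric_trace \<dots> = - (1/2) * \<xi> * real (dim V) - (1/4) * metric_trace jj_trace"
    by (simp add: lin_trace_proj_perp flip: lin_trace_eq_metric_trace)
  finally show ?thesis by (simp add: metric_trace_jj_trace)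
qed

end

theorem theorem3p6:
  fixes br :: "real^'n \<Rightarrow> real^'n \<Rightarrow> real^'n"
    and g :: "real^'n \<Rightarrow> real^'n \<Rightarrow> real"
    and \<phi> :: "real^'n \<Rightarrow> real"
    and Zb :: "(real^'n) set"
  assumes "modified_H_type br g \<phi>"
    and "pseudo_orthonormal_basis g (lie_center br) Zb"
  shows "scalar_curvature br g =
           - real (dim (orth_compl g (lie_center br))) * (\<Sum>z\<in>Zb. g z z * \<phi> z) / 4"
proof -
  interpret modified_H_type_group br g \<phi> Zb
    using assms by unfold_locales
  show ?thesis
    using scalar_curvature_eq by (simp add: \<xi>_def)
qed

end
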